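(* For all $\alpha\in(0,\pi/4]$ and $\beta\in[0,t(\alpha)]$, $$\max_{r\in[0,1]} f_1(\alpha,\beta,r)\ \ge\ \tfrac12\sqrt{6-2\cos(4\alpha)}.$$
   Context: $f_1(\alpha,\beta,r)=\frac{2\sin\alpha}{\cos\beta(\tan\alpha+\tan\beta)}\cdot\frac{1+\frac{2\tan\beta}{\tan\alpha+\tan\beta}r}{\sqrt{1+r^2+2\cos(2\alpha)r}}$, and $t(\alpha)=\arctan\!\left(\frac{\sin(3\alpha)-\sin\alpha}{3\cos\alpha-\cos(3\alpha)}\right)$. *)

theory Defs
  imports "HOL-Analysis.Analysis"
begin

definition f1 :: "real \<Rightarrow> real \<Rightarrow> real \<Rightarrow> real" where
  "f1 \<alpha> \<beta> r = (2 * sin \<alpha>) / (cos \<beta> * (tan \<alpha> + tan \<beta>)) *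
     ((1 + (2 * tan \<beta>) / (tan \<alpha> + tan \<beta>) * r) /
      sqrt (1 + r^2 + 2 * cos (2 * \<alpha>) * r))"

definition t :: "real \<Rightarrow> real" where
  "t \<alpha> = arctan ((sin (3 * \<alpha>) - sin \<alpha>) / (3 * cos \<alpha> - cos (3 * \<alpha>)))"

end

(*
  There f1 alpha beta 0 = sin (2 alpha) / sin (alpha + beta),
  and t alpha is exactly the angle with
    sin (alpha + t alpha) = sin (2 alpha) / sqrt (1 + sin (2 alpha)^2).
  Since alpha + t alpha < pi/2, sin (alpha + beta) increases with beta on [0, t alpha], so
  f1 alpha beta 0 >= sqrt (1 + sin (2 alpha)^2) = sqrt (6 - 2 cos (4 alpha)) / 2.
*)
theory Submission
  imports Defs
begin

lemma t_eq_arctan: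
  "t \<alpha> = arctan (sin \<alpha> * cos (2 * \<alpha>) / (cos \<alpha> * (1 + 2 * (sin \<alpha>)\<^sup>2)))"
proof -
  have num: "sin (3 * \<alpha>) - sin \<alpha> = 2 * sin \<alpha> * cos (2 * \<alpha>)"
    using sin_diff_sin[of "3 * \<alpha>" \<alpha>] by simp
  have den: "3 * cos \<alpha> - cos (3 * \<alpha>) = 2 * cos \<alpha> * (1 + 2 * (sin \<alpha>)\<^sup>2)"
    unfolding cos_treble_cos sin_squared_eq
    by (simp add: algebra_simps power3_eq_cube power2_eq_square)
  show ?thesis
    unfolding t_def num den by simp
qed

lemma sin_add_t_eq:
  assumes "0 < cos \<alpha>"
  shows "sin (\<alpha> + t \<alpha>) = sin (2 * \<alpha>) / sqrt (1 + (sin (2 * \<alpha>))\<^sup>2)"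
proof -
  define s c where "s = sin \<alpha>" and "c = cos \<alpha>"
  define D R where "D = 1 + 2 * s\<^sup>2" and "R = sqrt (1 + 4 * s\<^sup>2 * c\<^sup>2)"
  define x where "x = s * (c\<^sup>2 - s\<^sup>2) / (c * D)"
  have sc: "s\<^sup>2 + c\<^sup>2 = 1" unfolding s_def c_def by simp
  have "0 < D" unfolding D_def by (simp add: add_pos_nonneg)
  hence cD: "0 < c * D" using assms unfolding c_def by simp
  have tx: "t \<alpha> = arctan x"
    unfolding t_eq_arctan x_def D_def s_def c_def cos_double ..
  have "1 + x\<^sup>2 = (1 + 4 * s\<^sup>2 * c\<^sup>2) / (c * D)\<^sup>2"
    using cD sc unfolding x_def D_def by (simp add: field_simps) algebra
  hence root: "sqrt (1 + x\<^sup>2) = R / (c * D)"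
    using cD unfolding R_def by (simp add: real_sqrt_divide)
  have lin: "s + c * x = 2 * s / D"
    using \<open>0 < D\<close> cD sc unfolding x_def D_def by (simp add: field_simps) algebra
  have "sin (\<alpha> + t \<alpha>) = (s + c * x) / sqrt (1 + x\<^sup>2)"
    unfolding tx sin_add sin_arctan cos_arctan s_def c_def
    by (simp add: add_divide_distrib mult.commute)
  also have "\<dots> = 2 * s * c / R"
    unfolding lin root using \<open>0 < D\<close> cD by (simp add: field_simps)
  finally show ?thesis
    unfolding R_def sin_double s_def c_def by (simp add: power_mult_distrib)
qed

lemma add_t_less_pi_half:
  assumes "0 < \<alpha>" and "\<alpha> < pi / 2"
  shows "\<alpha> + t \<alpha> < pi / 2"
proof -
  define s c where "s = sin \<alpha>" and "c = cos \<alpha>"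
  have s: "0 < s" unfolding s_def using assms by (simp add: sin_gt_zero)
  have c: "0 < c" unfolding c_def using assms by (simp add: cos_gt_zero)
  have "s\<^sup>2 * (c\<^sup>2 - s\<^sup>2) \<le> c\<^sup>2 * s\<^sup>2" using s by (simp add: algebra_simps)
  also have "\<dots> < c\<^sup>2 * (1 + 2 * s\<^sup>2)"
    using c by (intro mult_strict_left_mono) (simp_all add: add_nonneg_pos)
  finally have "s * (c\<^sup>2 - s\<^sup>2) / (c * (1 + 2 * s\<^sup>2)) < c / s"
    using s c by (simp add: divide_simps add_pos_nonneg power2_eq_square mult_ac)
  hence "t \<alpha> < arctan (tan (pi / 2 - \<alpha>))"
    unfolding t_eq_arctan tan_cot' arctan_less_iff cot_def cos_double s_def c_def .
  thus ?thesis using assms by (simp add: arctan_tan)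
qed

lemma f1_at_0:
  assumes "cos \<alpha> \<noteq> 0" and "cos \<beta> \<noteq> 0"
  shows "f1 \<alpha> \<beta> 0 = sin (2 * \<alpha>) / sin (\<alpha> + \<beta>)"
proof -
  have "cos \<beta> * (tan \<alpha> + tan \<beta>) = sin (\<alpha> + \<beta>) / cos \<alpha>"
    using assms unfolding tan_def sin_add by (simp add: field_simps)
  thus ?thesis using assms unfolding f1_def sin_double by simp
qed

lemma sqrt_6_minus_cos_4:
  "sqrt (6 - 2 * cos (4 * x)) / 2 = sqrt (1 + (sin (2 * x))\<^sup>2)"
proof -
  have "6 - 2 * cos (4 * x) = 2\<^sup>2 * (1 + (sin (2 * x))\<^sup>2)"
    using cos_double_sin[of "2 * x"] by simp
  hence "sqrt (6 - 2 * cos (4 * x)) = sqrt (2\<^sup>2) * sqrt (1 + (sin (2 * x))\<^sup>2)"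
    by (simp only: real_sqrt_mult)
  thus ?thesis by simp
qed

lemma continuous_on_f1:
  assumes "sin (2 * \<alpha>) \<noteq> 0"
  shows "continuous_on A (f1 \<alpha> \<beta>)"
proof -
  have "1 + r\<^sup>2 + 2 * cos (2 * \<alpha>) * r = (r + cos (2 * \<alpha>))\<^sup>2 + (sin (2 * \<alpha>))\<^sup>2" for r
    by (simp add: power2_eq_square algebra_simps sin_squared_eq)
  hence "sqrt (1 + r\<^sup>2 + 2 * cos (2 * \<alpha>) * r) \<noteq> 0" for r
    using assms by (simp add: add_nonneg_pos)
  thus ?thesis unfolding f1_def by (intro continuous_intros) auto
qed

theorem lemma9:
  fixes \<alpha> \<beta> :: real
  assumes "0 < \<alpha>" and "\<alpha> \<le> pi / 4"
    and "0 \<le> \<beta>" and "\<beta> \<le> t \<alpha>"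
  shows "(SUP r\<in>{0..1}. f1 \<alpha> \<beta> r) \<ge> sqrt (6 - 2 * cos (4 * \<alpha>)) / 2"
proof -
  have "\<alpha> < pi / 2" using assms(2) pi_gt_zero by linarith
  hence sum_lt: "\<alpha> + \<beta> < pi / 2" using add_t_less_pi_half assms(1,4) by fastforce
  have cos_pos: "0 < cos \<alpha>" "0 < cos \<beta>"
    using assms(1,3) \<open>\<alpha> < pi / 2\<close> sum_lt by (auto intro!: cos_gt_zero_pi)
  have sin_2\<alpha>: "0 < sin (2 * \<alpha>)" using assms(1) \<open>\<alpha> < pi / 2\<close> by (simp add: sin_gt_zero)
  have "0 < sin (\<alpha> + \<beta>)" using assms(1,3) sum_lt by (simp add: sin_gt_zero)
  moreover have "sin (\<alpha> + \<beta>) \<le> sin (\<alpha> + t \<alpha>)"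
    using assms add_t_less_pi_half[of \<alpha>] \<open>\<alpha> < pi / 2\<close> by (intro sin_monotone_2pi_le) auto
  ultimately have "sin (2 * \<alpha>) / sin (\<alpha> + t \<alpha>) \<le> f1 \<alpha> \<beta> 0"
    unfolding f1_at_0[OF cos_pos[THEN less_imp_neq, symmetric]]
    using sin_2\<alpha> by (intro divide_left_mono) auto
  hence "sqrt (6 - 2 * cos (4 * \<alpha>)) / 2 \<le> f1 \<alpha> \<beta> 0"
    unfolding sqrt_6_minus_cos_4 sin_add_t_eq[OF cos_pos(1)] using sin_2\<alpha> by simp
  also have "f1 \<alpha> \<beta> 0 \<le> (SUP r\<in>{0..1}. f1 \<alpha> \<beta> r)"
    using sin_2\<alpha> by (intro cSUP_upper bounded_imp_bdd_above compact_imp_bounded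
        compact_continuous_image continuous_on_f1) auto
  finally show ?thesis .
qed

end
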